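(* Let $K$ be a field of characteristic $0$ and let $S$ be a finite set of non-zero integers. Then there exists a positive integer $N$ such that $X_N^S=K^S$.
   Context: $K^S$ denotes the $K$-algebra of all functions $S\to K$ (with pointwise operations). Define $\gamma^S\colon K^*\to K^S$ by $\gamma^S(x)(s):=x^s$ for $s\in S$. For a positive integer $k$, let $X_k^S:=\{\sum_{i=1}^k\gamma^S(x_i)-\sum_{j=1}^k\gamma^S(y_j) : x_1,\dots,x_k,y_1,\dots,y_k\in K^*\}\subseteq K^S$. *)

theory Defs
  imports Main "HOL-Library.FuncSet"
begin

text \<open>Elements of K^S are modelled as extensional functions on S (PiE S UNIV).\<close>

definition gammaS :: "int set \<Rightarrow> 'k::field \<Rightarrow> (int \<Rightarrow> 'k)" where
  "gammaS S x = (\<lambda>s\<in>S. x powi s)"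

definition XS :: "int set \<Rightarrow> nat \<Rightarrow> (int \<Rightarrow> 'k::field) set" where
  "XS S k = {(\<lambda>s\<in>S. (\<Sum>i<k. gammaS S (x i) s) - (\<Sum>j<k. gammaS S (y j) s)) | x y.
              (\<forall>i<k. x i \<noteq> 0) \<and> (\<forall>j<k. y j \<noteq> 0)}"

end

theory Submission
  imports Defs "HOL-Computational_Algebra.Polynomial"
begin

text \<open>
  Fix a nonzero exponent s0 in S. Multiplying all bases by 2^j and taking an integer combination
  with the coefficients of a polynomial Q weights the differences x^s - y^s by Q(2^s); if the
  zeros of Q among the numbers 2^s are exactly those with s in S - {s0}, only the coordinate s0
  survives. There we take y = 1 and x^s0 = (1 + 2^j t)^d with d = |s0|, and combine once more
  with the coefficients of a polynomial P vanishing at 2^k for k in {0..d} - {1}: by the binomial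
  theorem only the linear term d P(2) t remains. Integer combinations cost a bounded number of
  summands, so every multiple of a unit vector, and hence every vector in K^S, is a difference of
  power sums of bounded length.
\<close>

lemma Ints_coeff_prod:
  assumes "\<And>a j. a \<in> A \<Longrightarrow> coeff (p a) j \<in> \<int>"
  shows "coeff (\<Prod>a\<in>A. p a) j \<in> \<int>"
  using assms
proof (induction A arbitrary: j rule: infinite_finite_induct)
  case (insert a A)
  then show ?case
    by (auto simp: coeff_mult intro!: Ints_sum Ints_mult)
qed simp_all

lemma of_rat_power_int: "of_rat (q powi n) = (of_rat q :: 'k::field_char_0) powi n"
  by (simp add: power_int_def of_rat_power of_rat_inverse)

lemma two_powi_eq_iff: "(2::'k::field_char_0) powi e = 2 powi f \<longleftrightarrow> e = f"
proof -
  have "(2::'k) powi e = of_rat (2 powi e)" "(2::'k) powi f = of_rat (2 powi f)"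
    by (simp_all add: of_rat_power_int)
  moreover have "(2::rat) powi e \<noteq> 2 powi f" if "e \<noteq> f"
    using that power_int_strict_increasing[of e f "2::rat"] power_int_strict_increasing[of f e "2::rat"]
    by (auto simp: linorder_neq_iff)
  ultimately show ?thesis by (metis of_rat_eq_iff)
qed

lemma exists_Ints_poly_zeros_two_powi:
  fixes F :: "int set"
  assumes "finite F"
  shows "\<exists>Q :: 'k::field_char_0 poly. (\<forall>j. coeff Q j \<in> \<int>) \<and> (\<forall>e. poly Q (2 powi e) = 0 \<longleftrightarrow> e \<in> F)"
proof -
  \<comment> \<open>the factor \<open>X - 2 powi f\<close>, scaled by \<open>2 ^ nat \<bar>f\<bar>\<close> to have integer coefficients also for \<open>f < 0\<close>\<close>
  define q :: "int \<Rightarrow> 'k poly" where "q f = [:- (2 ^ nat (\<bar>f\<bar> + f)), 2 ^ nat \<bar>f\<bar>:]" for f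
  have two_powi: "(2::'k) powi n = 2 ^ nat n" if "n \<ge> 0" for n
    using that by (simp add: power_int_def)
  have shift: "(2::'k) ^ nat (\<bar>f\<bar> + f) = 2 ^ nat \<bar>f\<bar> * 2 powi f" for f
    using two_powi[of "\<bar>f\<bar> + f"] two_powi[of "\<bar>f\<bar>"] power_int_add[of "2::'k" "\<bar>f\<bar>" f] by simp
  have q_two_powi: "poly (q f) (2 powi e) = 2 ^ nat \<bar>f\<bar> * (2 powi e - 2 powi f)" for f e
  proof -
    have "poly (q f) (2 powi e) = 2 ^ nat \<bar>f\<bar> * 2 powi e - 2 ^ nat (\<bar>f\<bar> + f)"
      by (simp add: q_def mult.commute)
    then show ?thesis
      by (simp only: shift right_diff_distrib)
  qed
  have "coeff (q f) j \<in> \<int>" for f j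
    by (cases j) (auto simp: q_def coeff_pCons split: nat.split)
  moreover have "poly (\<Prod>f\<in>F. q f) (2 powi e) = 0 \<longleftrightarrow> e \<in> F" for e
    using assms by (simp add: poly_prod q_two_powi two_powi_eq_iff)
  ultimately show ?thesis
    using Ints_coeff_prod[of F q] by blast
qed

lemma sum_coeff_mult_one_add_power:
  fixes Q :: "'a::comm_ring_1 poly"
  shows "(\<Sum>j\<le>degree Q. coeff Q j * (1 + z ^ j * t) ^ d)
       = (\<Sum>k\<le>d. of_nat (d choose k) * t ^ k * poly Q (z ^ k))"
proof -
  have "(1 + z ^ j * t) ^ d = (\<Sum>k\<le>d. of_nat (d choose k) * t ^ k * (z ^ k) ^ j)" for j
    using binomial_ring[of "z ^ j * t" 1 d]
    by (simp add: add.commute power_mult_distrib power_mult[symmetric] mult.commute mult.left_commute)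
  then have "(\<Sum>j\<le>degree Q. coeff Q j * (1 + z ^ j * t) ^ d)
      = (\<Sum>j\<le>degree Q. \<Sum>k\<le>d. coeff Q j * (of_nat (d choose k) * t ^ k * (z ^ k) ^ j))"
    by (simp add: sum_distrib_left)
  also have "\<dots> = (\<Sum>k\<le>d. of_nat (d choose k) * t ^ k * poly Q (z ^ k))"
    by (subst sum.swap) (simp add: poly_altdef sum_distrib_left mult.left_commute)
  finally show ?thesis .
qed

lemma exists_powi_eq_power:
  fixes z :: "'k::field"
  assumes "e \<noteq> 0" "z \<noteq> 0"
  shows "\<exists>x. x \<noteq> 0 \<and> x powi e = z ^ nat \<bar>e\<bar>"
proof (cases "e > 0")
  case True
  then show ?thesis
    using assms(2) by (intro exI[of _ z]) (simp add: power_int_def)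
next
  case False
  then show ?thesis
    using assms by (intro exI[of _ "inverse z"]) (simp add: power_int_def)
qed

lemma exists_sum_avoiding_finite:
  fixes c :: "'a::ring_char_0"
  assumes "finite B"
  shows "\<exists>t. t \<notin> B \<and> c - t \<notin> B"
proof -
  obtain t where t: "t \<notin> B \<union> (\<lambda>b. c - b) ` B"
    using ex_new_if_finite[OF infinite_UNIV_char_0, of "B \<union> (\<lambda>b. c - b) ` B"] assms by auto
  have "c - t \<notin> B"
  proof
    assume "c - t \<in> B"
    then have "c - (c - t) \<in> (\<lambda>b. c - b) ` B"
      by (rule imageI)
    then show False
      using t by simp
  qed
  then show ?thesis
    using t by blast
qed

lemma exists_Ints_poly_one_add_power_linear:
  assumes "d \<ge> 1"
  shows "\<exists>(P :: 'k::field_char_0 poly) \<mu>. (\<forall>j. coeff P j \<in> \<int>) \<and> \<mu> \<noteq> 0 \<and>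
           (\<forall>t. (\<Sum>j\<le>degree P. coeff P j * ((1 + 2 ^ j * t) ^ d - 1)) = \<mu> * t)"
proof -
  obtain P :: "'k poly" where P: "\<forall>j. coeff P j \<in> \<int>"
    "\<forall>e. poly P (2 powi e) = 0 \<longleftrightarrow> e \<in> int ` ({..d} - {1})"
    using exists_Ints_poly_zeros_two_powi[of "int ` ({..d} - {1})"] by blast
  have P_two_power: "poly P (2 ^ k) = 0 \<longleftrightarrow> k \<noteq> 1" if "k \<le> d" for k
    using P(2)[rule_format, of "int k"] that by (auto simp: power_int_of_nat)
  have "(\<Sum>j\<le>degree P. coeff P j * ((1 + 2 ^ j * t) ^ d - 1)) = of_nat d * poly P 2 * t" for t
  proof -
    have "(\<Sum>j\<le>degree P. coeff P j * ((1 + 2 ^ j * t) ^ d - 1))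
        = (\<Sum>j\<le>degree P. coeff P j * (1 + 2 ^ j * t) ^ d) - poly P 1"
      by (simp add: poly_altdef right_diff_distrib sum_subtractf)
    also have "poly P 1 = 0"
      using P_two_power[of 0] by simp
    also have "(\<Sum>j\<le>degree P. coeff P j * (1 + 2 ^ j * t) ^ d)
        = (\<Sum>k\<le>d. of_nat (d choose k) * t ^ k * poly P (2 ^ k))"
      by (rule sum_coeff_mult_one_add_power)
    also have "\<dots> = (\<Sum>k\<le>d. if k = 1 then of_nat d * poly P 2 * t else 0)"
      by (rule sum.cong) (auto simp: P_two_power)
    also have "\<dots> = of_nat d * poly P 2 * t"
      using assms by simp
    finally show ?thesis by simp
  qed
  moreover have "of_nat d * poly P 2 \<noteq> 0"
    using assms P_two_power[of 1] by simp
  ultimately show ?thesis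
    using P(1) by blast
qed

definition power_sum_diff :: "int set \<Rightarrow> nat \<Rightarrow> (int \<Rightarrow> 'k::field) \<Rightarrow> bool" where
  "power_sum_diff S k v \<longleftrightarrow> (\<exists>x y. (\<forall>i<k. x i \<noteq> 0) \<and> (\<forall>j<k. y j \<noteq> 0) \<and>
      (\<forall>s\<in>S. v s = (\<Sum>i<k. x i powi s) - (\<Sum>j<k. y j powi s)))"

lemma XS_eq: "XS S k = {v \<in> S \<rightarrow>\<^sub>E (UNIV :: 'k::field set). power_sum_diff S k v}"
proof (intro set_eqI iffI)
  fix v :: "int \<Rightarrow> 'k" assume "v \<in> XS S k"
  then obtain x y where v: "v = (\<lambda>s\<in>S. (\<Sum>i<k. gammaS S (x i) s) - (\<Sum>j<k. gammaS S (y j) s))"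
    and "\<forall>i<k. x i \<noteq> 0" "\<forall>j<k. y j \<noteq> 0"
    unfolding XS_def by blast
  then have "power_sum_diff S k v"
    unfolding power_sum_diff_def by (intro exI[of _ x] exI[of _ y]) (simp add: gammaS_def)
  then show "v \<in> {v \<in> S \<rightarrow>\<^sub>E UNIV. power_sum_diff S k v}"
    using v by simp
next
  fix v :: "int \<Rightarrow> 'k" assume "v \<in> {v \<in> S \<rightarrow>\<^sub>E UNIV. power_sum_diff S k v}"
  then obtain x y where v: "v \<in> S \<rightarrow>\<^sub>E UNIV" "\<forall>i<k. x i \<noteq> 0" "\<forall>j<k. y j \<noteq> 0"
    "\<forall>s\<in>S. v s = (\<Sum>i<k. x i powi s) - (\<Sum>j<k. y j powi s)"
    unfolding power_sum_diff_def by blast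
  have "v = (\<lambda>s\<in>S. (\<Sum>i<k. gammaS S (x i) s) - (\<Sum>j<k. gammaS S (y j) s))"
    using v(1,4) by (auto simp: gammaS_def PiE_iff extensional_def)
  then show "v \<in> XS S k"
    unfolding XS_def using v(2,3) by blast
qed

lemma power_sum_diff_cong:
  "power_sum_diff S k v \<Longrightarrow> (\<And>s. s \<in> S \<Longrightarrow> v s = w s) \<Longrightarrow> power_sum_diff S k w"
  unfolding power_sum_diff_def by metis

lemma power_sum_diff_zero: "power_sum_diff S k (\<lambda>s. 0)"
  unfolding power_sum_diff_def by (intro exI[of _ "\<lambda>_. 1"]) simp

lemma power_sum_diff_single:
  "x \<noteq> 0 \<Longrightarrow> y \<noteq> 0 \<Longrightarrow> power_sum_diff S 1 (\<lambda>s. x powi s - y powi s)"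
  unfolding power_sum_diff_def by (rule exI[of _ "\<lambda>_. x"], rule exI[of _ "\<lambda>_. y"]) simp

lemma power_sum_diff_add:
  assumes "power_sum_diff S k v" "power_sum_diff S l w"
  shows "power_sum_diff S (k + l) (\<lambda>s. v s + w s)"
proof -
  obtain x y where xy: "\<forall>i<k. x i \<noteq> 0" "\<forall>j<k. y j \<noteq> 0"
    "\<forall>s\<in>S. v s = (\<Sum>i<k. x i powi s) - (\<Sum>j<k. y j powi s)"
    using assms(1) unfolding power_sum_diff_def by blast
  obtain x' y' where xy': "\<forall>i<l. x' i \<noteq> 0" "\<forall>j<l. y' j \<noteq> 0"
    "\<forall>s\<in>S. w s = (\<Sum>i<l. x' i powi s) - (\<Sum>j<l. y' j powi s)"
    using assms(2) unfolding power_sum_diff_def by blast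
  define X where "X i = (if i < k then x i else x' (i - k))" for i
  define Y where "Y i = (if i < k then y i else y' (i - k))" for i
  have sum_split: "(\<Sum>i<k + l. f i) = (\<Sum>i<k. f i) + (\<Sum>i<l. f (k + i))" for f :: "nat \<Rightarrow> 'a::field"
    by (induction l) (auto simp: add.assoc)
  show ?thesis
    unfolding power_sum_diff_def
  proof (intro exI conjI allI impI ballI)
    fix i assume "i < k + l"
    then show "X i \<noteq> 0" "Y i \<noteq> 0"
      using xy xy' by (auto simp: X_def Y_def)
  next
    fix s assume "s \<in> S"
    then show "v s + w s = (\<Sum>i<k + l. X i powi s) - (\<Sum>j<k + l. Y j powi s)"
      using xy(3) xy'(3) by (simp add: sum_split X_def Y_def)
  qed
qed

lemma power_sum_diff_uminus:
  assumes "power_sum_diff S k v"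
  shows "power_sum_diff S k (\<lambda>s. - v s)"
proof -
  obtain x y where "\<forall>i<k. x i \<noteq> 0" "\<forall>j<k. y j \<noteq> 0"
    "\<forall>s\<in>S. v s = (\<Sum>i<k. x i powi s) - (\<Sum>j<k. y j powi s)"
    using assms unfolding power_sum_diff_def by blast
  then show ?thesis
    unfolding power_sum_diff_def by (intro exI[of _ y] exI[of _ x]) simp
qed

lemma power_sum_diff_mono:
  assumes "power_sum_diff S k v" "k \<le> l"
  shows "power_sum_diff S l v"
  using power_sum_diff_add[OF assms(1) power_sum_diff_zero[of S "l - k"]] assms(2) by simp

lemma power_sum_diff_of_nat_mult:
  "power_sum_diff S k v \<Longrightarrow> power_sum_diff S (n * k) (\<lambda>s. of_nat n * v s)"
proof (induction n)
  case 0
  then show ?case using power_sum_diff_zero by simp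
next
  case (Suc n)
  then show ?case
    using power_sum_diff_add[OF Suc.prems Suc.IH[OF Suc.prems]] by (simp add: algebra_simps)
qed

lemma power_sum_diff_Ints_mult:
  assumes "c \<in> \<int>"
  shows "\<exists>m. \<forall>v. power_sum_diff S k v \<longrightarrow> power_sum_diff S m (\<lambda>s. c * v s)"
proof -
  obtain n where c: "c = of_int n"
    using assms by (auto elim: Ints_cases)
  have "power_sum_diff S (nat \<bar>n\<bar> * k) (\<lambda>s. c * v s)" if "power_sum_diff S k v" for v
  proof (cases "n \<ge> 0")
    case True
    then show ?thesis using power_sum_diff_of_nat_mult[OF that, of "nat n"] c by simp
  next
    case False
    then show ?thesis
      using power_sum_diff_uminus[OF power_sum_diff_of_nat_mult[OF that, of "nat (- n)"]] c by simp
  qed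
  then show ?thesis by blast
qed

lemma power_sum_diff_sum:
  assumes "finite A" "\<And>j. j \<in> A \<Longrightarrow> a j \<in> \<int>"
  shows "\<exists>m. \<forall>V. (\<forall>j\<in>A. power_sum_diff S k (V j)) \<longrightarrow>
           power_sum_diff S m (\<lambda>s. \<Sum>j\<in>A. a j * V j s)"
  using assms
proof (induction A rule: finite_induct)
  case empty
  then show ?case using power_sum_diff_zero by auto
next
  case (insert j A)
  obtain m1 where m1: "\<forall>v. power_sum_diff S k v \<longrightarrow> power_sum_diff S m1 (\<lambda>s. a j * v s)"
    using power_sum_diff_Ints_mult insert.prems by blast
  obtain m2 where m2: "\<forall>V. (\<forall>j\<in>A. power_sum_diff S k (V j)) \<longrightarrow>
      power_sum_diff S m2 (\<lambda>s. \<Sum>j\<in>A. a j * V j s)"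
    using insert.IH insert.prems by blast
  have "power_sum_diff S (m1 + m2) (\<lambda>s. \<Sum>i\<in>insert j A. a i * V i s)"
    if "\<forall>i\<in>insert j A. power_sum_diff S k (V i)" for V
    using power_sum_diff_add[OF m1[rule_format] m2[rule_format], of "V j" V] that insert.hyps
    by simp
  then show ?case by blast
qed

lemma power_sum_diff_poly_weight:
  fixes Q :: "'k::field poly"
  assumes "\<And>j. coeff Q j \<in> \<int>" "b \<noteq> 0"
  shows "\<exists>m. \<forall>x y. x \<noteq> 0 \<longrightarrow> y \<noteq> 0 \<longrightarrow>
           power_sum_diff S m (\<lambda>s. poly Q (b powi s) * (x powi s - y powi s))"
proof -
  obtain m where m: "\<forall>V. (\<forall>j\<in>{..degree Q}. power_sum_diff S 1 (V j)) \<longrightarrow>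
      power_sum_diff S m (\<lambda>s. \<Sum>j\<le>degree Q. coeff Q j * V j s)"
    using power_sum_diff_sum[of "{..degree Q}" "coeff Q" S 1] assms(1) by auto
  have "power_sum_diff S m (\<lambda>s. poly Q (b powi s) * (x powi s - y powi s))"
    if "x \<noteq> 0" "y \<noteq> 0" for x y
  proof -
    have "power_sum_diff S m (\<lambda>s. \<Sum>j\<le>degree Q. coeff Q j * ((b ^ j * x) powi s - (b ^ j * y) powi s))"
      by (intro m[rule_format] ballI power_sum_diff_single) (use that assms(2) in auto)
    then show ?thesis
    proof (rule power_sum_diff_cong)
      fix s
      have "(b ^ j * z) powi s = (b powi s) ^ j * z powi s" for j and z :: 'k
        by (simp add: power_int_mult_distrib power_int_power power_int_power' mult.commute)
      then show "(\<Sum>j\<le>degree Q. coeff Q j * ((b ^ j * x) powi s - (b ^ j * y) powi s))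
          = poly Q (b powi s) * (x powi s - y powi s)"
        by (simp add: poly_altdef sum_distrib_right right_diff_distrib mult.assoc sum_subtractf)
    qed
  qed
  then show ?thesis by blast
qed

lemma power_sum_diff_isolate:
  fixes S :: "int set"
  assumes "finite S" "s0 \<in> S"
  shows "\<exists>m (\<nu>::'k::field_char_0). \<nu> \<noteq> 0 \<and> (\<forall>x y. x \<noteq> 0 \<longrightarrow> y \<noteq> 0 \<longrightarrow>
           power_sum_diff S m (\<lambda>s. if s = s0 then \<nu> * (x powi s0 - y powi s0) else 0))"
proof -
  obtain Q :: "'k poly" where Q: "\<forall>j. coeff Q j \<in> \<int>" "\<forall>e. poly Q (2 powi e) = 0 \<longleftrightarrow> e \<in> S - {s0}"
    using exists_Ints_poly_zeros_two_powi[of "S - {s0}"] assms(1) by blast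
  obtain m where m: "\<forall>x y. x \<noteq> 0 \<longrightarrow> y \<noteq> 0 \<longrightarrow>
      power_sum_diff S m (\<lambda>s. poly Q (2 powi s) * (x powi s - y powi s))"
    using power_sum_diff_poly_weight[of Q 2 S] Q(1) by auto
  have "power_sum_diff S m (\<lambda>s. if s = s0 then poly Q (2 powi s0) * (x powi s0 - y powi s0) else 0)"
    if "x \<noteq> 0" "y \<noteq> 0" for x y
    by (rule power_sum_diff_cong[OF m[rule_format, OF that]]) (auto simp: Q(2))
  moreover have "poly Q (2 powi s0) \<noteq> 0"
    using Q(2) by simp
  ultimately show ?thesis by blast
qed

lemma finite_roots_one_add_two_power_mult:
  "finite {t :: 'k::field_char_0. \<exists>j\<le>n. 1 + 2 ^ j * t = 0}"
proof (rule finite_subset)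
  show "{t :: 'k. \<exists>j\<le>n. 1 + 2 ^ j * t = 0} \<subseteq> (\<lambda>j. - 1 / 2 ^ j) ` {..n}"
  proof
    fix t :: 'k assume "t \<in> {t. \<exists>j\<le>n. 1 + 2 ^ j * t = 0}"
    then obtain j where j: "j \<le> n" "1 + 2 ^ j * t = 0"
      by blast
    then have "t * 2 ^ j = - 1"
      by (simp add: add_eq_0_iff mult.commute)
    then have "t = - 1 / 2 ^ j"
      by (rule eq_divide_imp[rotated]) simp
    then show "t \<in> (\<lambda>j. - 1 / 2 ^ j) ` {..n}"
      using j(1) by auto
  qed
qed simp

lemma power_sum_diff_coordinate_line:
  fixes S :: "int set"
  assumes "finite S" "s0 \<in> S" "s0 \<noteq> 0"
  shows "\<exists>M (\<kappa>::'k::field_char_0) B. \<kappa> \<noteq> 0 \<and> finite B \<and>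
           (\<forall>t. t \<notin> B \<longrightarrow> power_sum_diff S M (\<lambda>s. if s = s0 then \<kappa> * t else 0))"
proof -
  obtain m and \<nu> :: 'k where \<nu>: "\<nu> \<noteq> 0" and isolate: "\<And>x y. x \<noteq> 0 \<Longrightarrow> y \<noteq> 0 \<Longrightarrow>
      power_sum_diff S m (\<lambda>s. if s = s0 then \<nu> * (x powi s0 - y powi s0) else 0)"
    using power_sum_diff_isolate[OF assms(1,2)] by blast
  define d where "d = nat \<bar>s0\<bar>"
  have "d \<ge> 1"
    using assms(3) unfolding d_def by arith
  then obtain P :: "'k poly" and \<mu> where P: "\<forall>j. coeff P j \<in> \<int>" "\<mu> \<noteq> 0"
    "\<And>t. (\<Sum>j\<le>degree P. coeff P j * ((1 + 2 ^ j * t) ^ d - 1)) = \<mu> * t"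
    using exists_Ints_poly_one_add_power_linear[where 'k = 'k] by blast
  obtain M where M: "\<forall>V. (\<forall>j\<in>{..degree P}. power_sum_diff S m (V j)) \<longrightarrow>
      power_sum_diff S M (\<lambda>s. \<Sum>j\<le>degree P. coeff P j * V j s)"
    using power_sum_diff_sum[of "{..degree P}" "coeff P" S m] P(1) by auto
  define B where "B = {t :: 'k. \<exists>j\<le>degree P. 1 + 2 ^ j * t = 0}"
  have "power_sum_diff S M (\<lambda>s. if s = s0 then \<nu> * \<mu> * t else 0)" if "t \<notin> B" for t
  proof -
    have "\<forall>j\<in>{..degree P}. \<exists>x. x \<noteq> 0 \<and> x powi s0 = (1 + 2 ^ j * t) ^ d"
      using exists_powi_eq_power[OF assms(3)] \<open>t \<notin> B\<close> unfolding B_def d_def by auto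
    then obtain X where X: "\<forall>j\<in>{..degree P}. X j \<noteq> 0 \<and> X j powi s0 = (1 + 2 ^ j * t) ^ d"
      by (rule bchoice[elim_format]) blast
    have "power_sum_diff S M (\<lambda>s. \<Sum>j\<le>degree P. coeff P j *
        (if s = s0 then \<nu> * (X j powi s0 - 1 powi s0) else 0))"
      using M X isolate by simp
    then show ?thesis
    proof (rule power_sum_diff_cong)
      fix s
      show "(\<Sum>j\<le>degree P. coeff P j * (if s = s0 then \<nu> * (X j powi s0 - 1 powi s0) else 0))
          = (if s = s0 then \<nu> * \<mu> * t else 0)"
      proof (cases "s = s0")
        case True
        have "(\<Sum>j\<le>degree P. coeff P j * (\<nu> * (X j powi s0 - 1 powi s0)))
            = \<nu> * (\<Sum>j\<le>degree P. coeff P j * ((1 + 2 ^ j * t) ^ d - 1))"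
          unfolding sum_distrib_left by (rule sum.cong) (simp_all add: X mult.left_commute)
        then show ?thesis
          using True P(3)[of t] by simp
      qed simp
    qed
  qed
  moreover have "finite B"
    unfolding B_def by (rule finite_roots_one_add_two_power_mult)
  ultimately show ?thesis
    using \<nu> P(2) by (metis mult_eq_0_iff)
qed

lemma power_sum_diff_coordinate:
  fixes S :: "int set"
  assumes "finite S" "s0 \<in> S" "s0 \<noteq> 0"
  shows "\<exists>M. \<forall>c::'k::field_char_0. power_sum_diff S M (\<lambda>s. if s = s0 then c else 0)"
proof -
  obtain M and \<kappa> :: 'k and B where \<kappa>: "\<kappa> \<noteq> 0" and B: "finite B"
    and line: "\<And>t. t \<notin> B \<Longrightarrow> power_sum_diff S M (\<lambda>s. if s = s0 then \<kappa> * t else 0)"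
    using power_sum_diff_coordinate_line[OF assms] by blast
  have "power_sum_diff S (M + M) (\<lambda>s. if s = s0 then c else 0)" for c :: 'k
  proof -
    obtain t where t: "t \<notin> B" "c / \<kappa> - t \<notin> B"
      using exists_sum_avoiding_finite[OF B] by blast
    show ?thesis
      using power_sum_diff_add[OF line[OF t(1)] line[OF t(2)]]
      by (rule power_sum_diff_cong) (use \<kappa> in \<open>simp add: field_simps\<close>)
  qed
  then show ?thesis by blast
qed

lemma power_sum_diff_uniform:
  fixes S :: "int set"
  assumes "finite S" "0 \<notin> S"
  shows "\<exists>N. \<forall>v :: int \<Rightarrow> 'k::field_char_0. power_sum_diff S N v"
proof -
  obtain M where M: "\<And>s0 c. s0 \<in> S \<Longrightarrow> power_sum_diff S (M s0) (\<lambda>s. if s = s0 then c else (0::'k))"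
    using power_sum_diff_coordinate[OF assms(1)] assms(2) by metis
  define M0 where "M0 = (\<Sum>s\<in>S. M s)"
  have coordinate: "power_sum_diff S M0 (\<lambda>s. if s = s0 then c else 0)" if "s0 \<in> S" for s0 and c :: 'k
  proof -
    have "M s0 \<le> M0"
      unfolding M0_def using that assms(1) by (simp add: member_le_sum)
    then show ?thesis
      by (rule power_sum_diff_mono[OF M[OF that]])
  qed
  obtain N where N: "\<forall>V :: int \<Rightarrow> int \<Rightarrow> 'k. (\<forall>s0\<in>S. power_sum_diff S M0 (V s0)) \<longrightarrow>
      power_sum_diff S N (\<lambda>s. \<Sum>s0\<in>S. V s0 s)"
    using power_sum_diff_sum[of S "\<lambda>_. 1 :: 'k" S M0] assms(1) by auto
  have "power_sum_diff S N v" for v :: "int \<Rightarrow> 'k"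
  proof -
    have "power_sum_diff S N (\<lambda>s. \<Sum>s0\<in>S. if s = s0 then v s0 else 0)"
      using N[rule_format, of "\<lambda>s0 s. if s = s0 then v s0 else 0"] coordinate by blast
    then show ?thesis
      by (rule power_sum_diff_cong) (simp add: assms(1))
  qed
  then show ?thesis by blast
qed

theorem theorem3p2:
  fixes S :: "int set"
  assumes "finite S" and "0 \<notin> S"
  shows "\<exists>N::nat. N > 0 \<and> XS S N = (S \<rightarrow>\<^sub>E (UNIV :: 'k::field_char_0 set))"
proof -
  obtain N where N: "\<And>v :: int \<Rightarrow> 'k. power_sum_diff S N v"
    using power_sum_diff_uniform[OF assms] by blast
  have "XS S (Suc N) = (S \<rightarrow>\<^sub>E (UNIV :: 'k set))"
    using power_sum_diff_mono[OF N, of "Suc N"] by (auto simp: XS_eq)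
  then show ?thesis by blast
qed

end
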